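(* If $(T,X)$ is a uniformly left-syndetically stable compact flow ($T$ a Hausdorff topological group, $X$ compact Hausdorff), then $(T,X)$ is an a.p. flow.
   Context: $\mathscr U_X$ is the uniformity of $X$; for $A\subseteq T$ and $\delta\in\mathscr U_X$, $A\delta=\{(ax,ay):a\in A,(x,y)\in\delta\}$. $A\subseteq T$ is left-syndetic if there is a compact $K\subseteq T$ with $A\cap tK\neq\emptyset$ for all $t\in T$; $A$ is (right) syndetic if there is compact $K$ with $Kt\cap A\neq\emptyset$ for all $t$. $(T,X)$ is uniformly left-syndetically stable if for every $\varepsilon\in\mathscr U_X$ there exist $\delta\in\mathscr U_X$ and a left-syndetic $A\subseteq T$ with $A\delta\subseteq\varepsilon$. A flow is an a.p. flow if for every $\alpha\in\mathscr U_X$ there is a syndetic $A\subseteq T$ with $Ax\subseteq\alpha[x]$ for all $x\in X$. *)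

theory Defs
  imports "HOL-Analysis.Analysis"
begin

definition topological_group :: "('g::topological_space \<Rightarrow> 'g \<Rightarrow> 'g) \<Rightarrow> 'g \<Rightarrow> ('g \<Rightarrow> 'g) \<Rightarrow> bool" where
  "topological_group mul e ginv \<longleftrightarrow>
     group mul e ginv \<and>
     continuous_on UNIV (\<lambda>p. mul (fst p) (snd p)) \<and>
     continuous_on UNIV ginv"

definition is_flow :: "('g::topological_space \<Rightarrow> 'g \<Rightarrow> 'g) \<Rightarrow> 'g \<Rightarrow> ('g \<Rightarrow> 'x::topological_space \<Rightarrow> 'x) \<Rightarrow> bool" where
  "is_flow mul e act \<longleftrightarrow>
     continuous_on UNIV (\<lambda>p. act (fst p) (snd p)) \<and>
     (\<forall>x. act e x = x) \<and>
     (\<forall>s t x. act (mul s t) x = act s (act t x))"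

definition entourage :: "('x::uniform_space \<times> 'x) set \<Rightarrow> bool" where
  "entourage E \<longleftrightarrow> eventually (\<lambda>p. p \<in> E) uniformity"

definition act_rel :: "('g \<Rightarrow> 'x \<Rightarrow> 'x) \<Rightarrow> 'g set \<Rightarrow> ('x \<times> 'x) set \<Rightarrow> ('x \<times> 'x) set" where
  "act_rel act A \<delta> = {(act a x, act a y) | a x y. a \<in> A \<and> (x, y) \<in> \<delta>}"

definition left_syndetic :: "('g::topological_space \<Rightarrow> 'g \<Rightarrow> 'g) \<Rightarrow> 'g set \<Rightarrow> bool" where
  "left_syndetic mul A \<longleftrightarrow> (\<exists>K. compact K \<and> (\<forall>t. A \<inter> (mul t ` K) \<noteq> {}))"

definition syndetic :: "('g::topological_space \<Rightarrow> 'g \<Rightarrow> 'g) \<Rightarrow> 'g set \<Rightarrow> bool" where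
  "syndetic mul A \<longleftrightarrow> (\<exists>K. compact K \<and> (\<forall>t. ((\<lambda>k. mul k t) ` K) \<inter> A \<noteq> {}))"

definition unif_left_synd_stable :: "('g::topological_space \<Rightarrow> 'g \<Rightarrow> 'g) \<Rightarrow> ('g \<Rightarrow> 'x::uniform_space \<Rightarrow> 'x) \<Rightarrow> bool" where
  "unif_left_synd_stable mul act \<longleftrightarrow>
     (\<forall>\<epsilon>. entourage \<epsilon> \<longrightarrow>
        (\<exists>\<delta> A. entourage \<delta> \<and> left_syndetic mul A \<and> act_rel act A \<delta> \<subseteq> \<epsilon>))"

definition ap_flow :: "('g::topological_space \<Rightarrow> 'g \<Rightarrow> 'g) \<Rightarrow> ('g \<Rightarrow> 'x::uniform_space \<Rightarrow> 'x) \<Rightarrow> bool" where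
  "ap_flow mul act \<longleftrightarrow>
     (\<forall>\<alpha>. entourage \<alpha> \<longrightarrow>
        (\<exists>A. syndetic mul A \<and> (\<forall>x. \<forall>a\<in>A. act a x \<in> {y. (x, y) \<in> \<alpha>})))"

end

theory Submission
  imports Defs
begin

text \<open>Left-syndetic stability makes the family of translations uniformly equicontinuous:
  given \<open>t\<close>, write \<open>t = a k\<^sup>-\<^sup>1\<close> with \<open>a \<in> A\<close> and \<open>k\<close> in the compact set \<open>K\<close>; the maps
  \<open>k\<^sup>-\<^sup>1\<close> for \<open>k \<in> K\<close> are uniformly equicontinuous by joint continuity and compactness, and
  \<open>a\<close> then moves \<open>\<delta>\<close>-close pairs \<open>\<epsilon>\<close>-close. On the compact space \<open>X\<close> an equicontinuous
  family of maps is totally bounded for the uniform structure, so for an entourage \<open>\<alpha>\<close>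
  there is a finite \<open>S\<close> such that every \<open>t\<^sup>-\<^sup>1\<close> is uniformly \<open>\<alpha>\<close>-close to some \<open>u \<in> S\<close>.
  Then \<open>u t\<close> moves every point \<open>\<alpha>\<close>-little, so the set of such elements meets \<open>S t\<close> for
  every \<open>t\<close>, i.e. it is syndetic.\<close>

lemma uniformity_symmetric_transE:
  fixes E :: "'a::uniform_space \<times> 'a \<Rightarrow> bool"
  assumes "eventually E uniformity"
  obtains D where "eventually D uniformity" "\<And>x y. D (x, y) \<Longrightarrow> D (y, x)"
    "\<And>x y z. D (x, y) \<Longrightarrow> D (y, z) \<Longrightarrow> E (x, z)"
proof -
  obtain D where D: "eventually D uniformity" "\<And>x y z. D (x, y) \<Longrightarrow> D (y, z) \<Longrightarrow> E (x, z)"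
    using uniformity_transE[OF assms] by blast
  define D' where "D' = (\<lambda>(x, y). D (x, y) \<and> D (y, x))"
  have "eventually D' uniformity"
    unfolding D'_def using eventually_conj[OF D(1) uniformity_sym[OF D(1)]]
    by (simp add: case_prod_unfold)
  moreover have "D' (y, x)" if "D' (x, y)" for x y
    using that unfolding D'_def by simp
  moreover have "E (x, z)" if "D' (x, y)" "D' (y, z)" for x y z
    using that D(2) unfolding D'_def by auto
  ultimately show thesis using that by blast
qed

lemma compact_imp_totally_bounded:
  fixes S :: "'a::uniform_space set"
  assumes "compact S"
  shows "totally_bounded S"
  unfolding totally_bounded_def
proof (intro allI impI)
  fix E :: "'a \<times> 'a \<Rightarrow> bool"
  assume E: "eventually E uniformity"
  have "\<forall>p. \<exists>W. open W \<and> p \<in> W \<and> (\<forall>y\<in>W. E (p, y))"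
  proof
    fix p
    have "eventually (\<lambda>y. E (p, y)) (nhds p)"
      unfolding eventually_nhds_uniformity using E by (auto elim: eventually_mono)
    then show "\<exists>W. open W \<and> p \<in> W \<and> (\<forall>y\<in>W. E (p, y))"
      unfolding eventually_nhds by blast
  qed
  from choice[OF this] obtain W where W: "\<forall>p. open (W p) \<and> p \<in> W p \<and> (\<forall>y\<in>W p. E (p, y))"
    by blast
  have opn: "\<And>p. p \<in> S \<Longrightarrow> open (W p)" and cov: "S \<subseteq> (\<Union>p\<in>S. W p)"
    and close: "\<And>p y. y \<in> W p \<Longrightarrow> E (p, y)"
    using W by blast+
  obtain P where P: "P \<subseteq> S" "finite P" "S \<subseteq> (\<Union>p\<in>P. W p)"
    by (rule compactE_image[OF assms opn cov])
  have "\<exists>p\<in>P. E (p, s)" if s: "s \<in> S" for s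
  proof -
    obtain p where "p \<in> P" "s \<in> W p"
      using P(3) s by blast
    then show ?thesis
      using close by blast
  qed
  with P(2) show "\<exists>P. finite P \<and> (\<forall>s\<in>S. \<exists>p\<in>P. E (p, s))"
    by blast
qed

definition uniformly_equicontinuous_on ::
    "'s set \<Rightarrow> ('s \<Rightarrow> 'x::uniform_space \<Rightarrow> 'y::uniform_space) \<Rightarrow> bool" where
  "uniformly_equicontinuous_on S f \<longleftrightarrow>
     (\<forall>E. eventually E uniformity \<longrightarrow>
        (\<exists>D. eventually D uniformity \<and> (\<forall>s\<in>S. \<forall>x y. D (x, y) \<longrightarrow> E (f s x, f s y))))"

lemma continuous_on_UNIV_prod_locally_uniform:
  fixes f :: "'s::topological_space \<Rightarrow> 'x::uniform_space \<Rightarrow> 'y::uniform_space"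
  assumes cont: "continuous_on UNIV (\<lambda>p. f (fst p) (snd p))"
    and E: "eventually E uniformity"
  obtains U V D where "open U" "k \<in> U" "open V" "x \<in> V" "eventually D uniformity"
    "\<And>k' x' y'. k' \<in> U \<Longrightarrow> x' \<in> V \<Longrightarrow> D (x', y') \<Longrightarrow> E (f k x, f k' y')"
proof -
  have "eventually (\<lambda>z. E (f k x, z)) (nhds (f k x))"
    unfolding eventually_nhds_uniformity using E by (auto elim: eventually_mono)
  moreover have "(\<lambda>p. f (fst p) (snd p)) \<midarrow>(k, x)\<rightarrow> f k x"
    using cont by (simp add: continuous_on_def)
  then have "((\<lambda>p. f (fst p) (snd p)) \<longlongrightarrow> f k x) (nhds (k, x))"
    using tendsto_at_iff_tendsto_nhds[of "\<lambda>p. f (fst p) (snd p)" "(k, x)"] by simp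
  ultimately have "eventually (\<lambda>p. E (f k x, f (fst p) (snd p))) (nhds k \<times>\<^sub>F nhds x)"
    unfolding nhds_prod[symmetric] filterlim_iff by blast
  then obtain Pk Px where Pk: "eventually Pk (nhds k)" and Px: "eventually Px (nhds x)"
    and P: "\<And>k' y. Pk k' \<Longrightarrow> Px y \<Longrightarrow> E (f k x, f k' y)"
    unfolding eventually_prod_filter by auto
  from Px have "eventually (\<lambda>(x', y). x' = x \<longrightarrow> Px y) uniformity"
    by (simp add: eventually_nhds_uniformity)
  then obtain D where D: "eventually D uniformity"
    and Dtrans: "\<And>a b c. D (a, b) \<Longrightarrow> D (b, c) \<Longrightarrow> a = x \<longrightarrow> Px c"
    by (rule uniformity_transE) auto
  have "eventually (\<lambda>y. D (x, y)) (nhds x)"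
    unfolding eventually_nhds_uniformity using D by (auto elim: eventually_mono)
  then obtain V where V: "open V" "x \<in> V" "\<And>y. y \<in> V \<Longrightarrow> D (x, y)"
    unfolding eventually_nhds by blast
  from Pk obtain U where U: "open U" "k \<in> U" "\<And>k'. k' \<in> U \<Longrightarrow> Pk k'"
    unfolding eventually_nhds by blast
  have "E (f k x, f k' y')" if "k' \<in> U" "x' \<in> V" "D (x', y')" for k' x' y'
    using P U(3) V(3) Dtrans that by blast
  with U V D that show thesis by blast
qed

lemma uniformly_equicontinuous_on_compact:
  fixes f :: "'s::topological_space \<Rightarrow> 'x::uniform_space \<Rightarrow> 'y::uniform_space"
  assumes cont: "continuous_on UNIV (\<lambda>p. f (fst p) (snd p))"
    and X: "compact (UNIV :: 'x set)" and K: "compact K"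
  shows "uniformly_equicontinuous_on K f"
  unfolding uniformly_equicontinuous_on_def
proof (intro allI impI)
  fix E :: "'y \<times> 'y \<Rightarrow> bool"
  assume "eventually E uniformity"
  then obtain E' where E': "eventually E' uniformity" "\<And>a b. E' (a, b) \<Longrightarrow> E' (b, a)"
    "\<And>a b c. E' (a, b) \<Longrightarrow> E' (b, c) \<Longrightarrow> E (a, c)"
    using uniformity_symmetric_transE by blast
  have "\<forall>p. \<exists>U V D. open U \<and> fst p \<in> U \<and> open V \<and> snd p \<in> V \<and> eventually D uniformity \<and>
      (\<forall>k'\<in>U. \<forall>x'\<in>V. \<forall>y'. D (x', y') \<longrightarrow> E' (f (fst p) (snd p), f k' y'))"
  proof
    fix p :: "'s \<times> 'x"
    show "\<exists>U V D. open U \<and> fst p \<in> U \<and> open V \<and> snd p \<in> V \<and> eventually D uniformity \<and>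
      (\<forall>k'\<in>U. \<forall>x'\<in>V. \<forall>y'. D (x', y') \<longrightarrow> E' (f (fst p) (snd p), f k' y'))"
      by (rule continuous_on_UNIV_prod_locally_uniform[OF cont E'(1), where k="fst p" and x="snd p"])
        blast
  qed
  then obtain U V D where UVD: "\<And>p. open (U p) \<and> fst p \<in> U p \<and> open (V p) \<and> snd p \<in> V p \<and>
      eventually (D p) uniformity \<and>
      (\<forall>k'\<in>U p. \<forall>x'\<in>V p. \<forall>y'. D p (x', y') \<longrightarrow> E' (f (fst p) (snd p), f k' y'))"
    by metis
  obtain C where C: "finite C" "K \<times> UNIV \<subseteq> (\<Union>p\<in>C. U p \<times> V p)"
  proof (rule compactE_image[OF compact_Times[OF K X], of "K \<times> UNIV" "\<lambda>p. U p \<times> V p"])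
    show "open (U p \<times> V p)" for p
      using UVD by (simp add: open_Times)
    show "K \<times> UNIV \<subseteq> (\<Union>p\<in>K \<times> UNIV. U p \<times> V p)"
      using UVD by (fastforce simp: subset_iff)
  qed blast
  define D0 where "D0 = (\<lambda>q. \<forall>p\<in>C. D p q)"
  have "eventually D0 uniformity"
    unfolding D0_def using C(1) UVD by (simp add: eventually_ball_finite)
  moreover have "E (f k x, f k y)" if "k \<in> K" "D0 (x, y)" for k x y
  proof -
    obtain p where p: "p \<in> C" "k \<in> U p" "x \<in> V p"
      using C(2) \<open>k \<in> K\<close> by blast
    have "E' (f (fst p) (snd p), f k x)" "E' (f (fst p) (snd p), f k y)"
      using UVD[of p] p uniformity_refl[of "D p" x] \<open>D0 (x, y)\<close> unfolding D0_def by auto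
    then show ?thesis
      using E'(2,3) by blast
  qed
  ultimately show "\<exists>D. eventually D uniformity \<and> (\<forall>k\<in>K. \<forall>x y. D (x, y) \<longrightarrow> E (f k x, f k y))"
    by blast
qed

lemma finite_range_representatives:
  assumes "finite (range c)"
  shows "\<exists>S. finite S \<and> (\<forall>s. \<exists>t\<in>S. c t = c s)"
proof (intro exI conjI allI)
  show "finite (inv c ` range c)"
    using assms by simp
  show "\<exists>t\<in>inv c ` range c. c t = c s" for s
    by (metis f_inv_into_f rangeI image_eqI)
qed

text \<open>Pigeonhole on the finitely many ways to approximate the images of a finite net by
  points of another finite net.\<close>
lemma uniformly_equicontinuous_on_UNIV_finite_net:
  fixes f :: "'s \<Rightarrow> 'x::uniform_space \<Rightarrow> 'x"
  assumes X: "compact (UNIV :: 'x set)"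
    and equi: "uniformly_equicontinuous_on UNIV f"
    and B: "eventually B uniformity"
  obtains S where "finite S" "\<And>s. \<exists>t\<in>S. \<forall>x. B (f s x, f t x)"
proof -
  obtain B1 where B1: "eventually B1 uniformity" "\<And>a b c. B1 (a, b) \<Longrightarrow> B1 (b, c) \<Longrightarrow> B (a, c)"
    using uniformity_transE[OF B] by blast
  obtain G where G: "eventually G uniformity" "\<And>a b. G (a, b) \<Longrightarrow> G (b, a)"
    "\<And>a b c. G (a, b) \<Longrightarrow> G (b, c) \<Longrightarrow> B1 (a, c)"
    using uniformity_symmetric_transE[OF B1(1)] by blast
  obtain D where D: "eventually D uniformity" "\<And>s x y. D (x, y) \<Longrightarrow> G (f s x, f s y)"
    using equi[unfolded uniformly_equicontinuous_on_def, rule_format, OF G(1)] by blast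
  have tb: "totally_bounded (UNIV :: 'x set)"
    using X by (rule compact_imp_totally_bounded)
  obtain P where P: "finite P" "\<And>x. \<exists>p\<in>P. D (p, x)"
    using tb[unfolded totally_bounded_def, rule_format, OF D(1)] by blast
  obtain Q where Q: "finite Q" "\<And>x. \<exists>q\<in>Q. G (q, x)"
    using tb[unfolded totally_bounded_def, rule_format, OF G(1)] by blast
  define c where "c = (\<lambda>s. \<lambda>p\<in>P. SOME q. q \<in> Q \<and> G (q, f s p))"
  have cQ: "c s p \<in> Q \<and> G (c s p, f s p)" if "p \<in> P" for s p
    using someI_ex[OF Q(2)[of "f s p", unfolded Bex_def]] that unfolding c_def by simp
  have "range c \<subseteq> PiE P (\<lambda>_. Q)"
  proof
    fix \<phi> assume "\<phi> \<in> range c"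
    then obtain s where s: "\<phi> = c s"
      by blast
    have "\<phi> \<in> extensional P"
      unfolding s c_def by (rule restrict_extensional)
    with cQ s show "\<phi> \<in> PiE P (\<lambda>_. Q)"
      unfolding PiE_iff by blast
  qed
  then have "finite (range c)"
    using P(1) Q(1) by (meson finite_PiE finite_subset)
  then obtain S where S: "finite S" "\<And>s. \<exists>t\<in>S. c t = c s"
    using finite_range_representatives by blast
  have close: "B (f s x, f t x)" if "c t = c s" for s t x
  proof -
    obtain p where p: "p \<in> P" "D (p, x)"
      using P(2) by blast
    have sx: "G (f s p, f s x)" and tx: "G (f t p, f t x)"
      using D(2)[OF p(2)] by blast+
    have sp: "G (c s p, f s p)" and tp: "G (c s p, f t p)"
      using cQ[OF p(1), of s] cQ[OF p(1), of t] that by auto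
    have "B1 (f s x, c s p)"
      using G(3)[OF G(2)[OF sx] G(2)[OF sp]] .
    moreover have "B1 (c s p, f t x)"
      using G(3)[OF tp tx] .
    ultimately show ?thesis
      by (rule B1(2))
  qed
  show thesis
  proof (rule that[OF S(1)])
    fix s
    obtain t where "t \<in> S" "c t = c s"
      using S(2) by blast
    with close show "\<exists>t\<in>S. \<forall>x. B (f s x, f t x)"
      by blast
  qed
qed

lemma left_syndetically_stable_imp_uniformly_equicontinuous:
  fixes mul :: "'g::topological_space \<Rightarrow> 'g \<Rightarrow> 'g"
    and act :: "'g \<Rightarrow> 'x::uniform_space \<Rightarrow> 'x"
  assumes "topological_group mul e ginv"
    and X: "compact (UNIV :: 'x set)"
    and "is_flow mul e act"
    and stable: "unif_left_synd_stable mul act"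
  shows "uniformly_equicontinuous_on UNIV act"
  unfolding uniformly_equicontinuous_on_def
proof (intro allI impI)
  interpret group mul e ginv
    using assms(1) unfolding topological_group_def by blast
  have ginv_cont: "continuous_on UNIV ginv"
    and cont: "continuous_on UNIV (\<lambda>p. act (fst p) (snd p))"
    and act_mul: "\<And>s t x. act (mul s t) x = act s (act t x)"
    using assms(1,3) unfolding topological_group_def is_flow_def by auto
  fix E :: "'x \<times> 'x \<Rightarrow> bool"
  assume "eventually E uniformity"
  then have "entourage {p. E p}"
    unfolding entourage_def by simp
  then obtain \<delta> A where \<delta>: "eventually (\<lambda>p. p \<in> \<delta>) uniformity" and "left_syndetic mul A"
    and sub: "act_rel act A \<delta> \<subseteq> {p. E p}"
    using stable unfolding unif_left_synd_stable_def entourage_def by blast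
  then obtain K where K: "compact K" "\<And>t. A \<inter> mul t ` K \<noteq> {}"
    unfolding left_syndetic_def by blast
  have "compact (ginv ` K)"
    using compact_continuous_image[OF continuous_on_subset[OF ginv_cont] K(1)] by simp
  then have "uniformly_equicontinuous_on (ginv ` K) act"
    by (rule uniformly_equicontinuous_on_compact[OF cont X])
  then obtain D where D: "eventually D uniformity"
    and DK: "\<And>k x y. k \<in> K \<Longrightarrow> D (x, y) \<Longrightarrow> (act (ginv k) x, act (ginv k) y) \<in> \<delta>"
    unfolding uniformly_equicontinuous_on_def using \<delta> by blast
  have "E (act s x, act s y)" if "D (x, y)" for s x y
  proof -
    obtain k where k: "k \<in> K" "mul s k \<in> A"
      using K(2)[of s] by blast
    have act_s: "act s z = act (mul s k) (act (ginv k) z)" for z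
      by (simp flip: act_mul add: assoc)
    show ?thesis
      using DK[OF k(1) that] k(2) sub unfolding act_s act_rel_def by blast
  qed
  with D show "\<exists>D. eventually D uniformity \<and> (\<forall>s\<in>UNIV. \<forall>x y. D (x, y) \<longrightarrow> E (act s x, act s y))"
    by blast
qed

lemma uniformly_equicontinuous_flow_imp_ap_flow:
  fixes mul :: "'g::topological_space \<Rightarrow> 'g \<Rightarrow> 'g"
    and act :: "'g \<Rightarrow> 'x::uniform_space \<Rightarrow> 'x"
  assumes "group mul e ginv"
    and X: "compact (UNIV :: 'x set)"
    and "is_flow mul e act"
    and equi: "uniformly_equicontinuous_on UNIV act"
  shows "ap_flow mul act"
  unfolding ap_flow_def
proof (intro allI impI)
  interpret group mul e ginv by fact
  have act_e: "\<And>x. act e x = x" and act_mul: "\<And>s t x. act (mul s t) x = act s (act t x)"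
    using assms(3) unfolding is_flow_def by auto
  fix \<alpha> :: "('x \<times> 'x) set"
  assume "entourage \<alpha>"
  then obtain S where S: "finite S" "\<And>s. \<exists>u\<in>S. \<forall>x. (act s x, act u x) \<in> \<alpha>"
    using uniformly_equicontinuous_on_UNIV_finite_net[OF X equi, of "\<lambda>p. p \<in> \<alpha>"]
    unfolding entourage_def by blast
  define A where "A = {a. \<forall>x. (x, act a x) \<in> \<alpha>}"
  have "(\<lambda>k. mul k t) ` S \<inter> A \<noteq> {}" for t
  proof -
    obtain u where u: "u \<in> S" "\<And>x. (act (ginv t) x, act u x) \<in> \<alpha>"
      using S(2)[of "ginv t"] by blast
    have "(x, act (mul u t) x) \<in> \<alpha>" for x
      using u(2)[of "act t x"] by (simp flip: act_mul add: act_e)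
    with u(1) show ?thesis
      unfolding A_def by blast
  qed
  then have "syndetic mul A"
    unfolding syndetic_def using finite_imp_compact[OF S(1)] by blast
  then show "\<exists>A. syndetic mul A \<and> (\<forall>x. \<forall>a\<in>A. act a x \<in> {y. (x, y) \<in> \<alpha>})"
    unfolding A_def by blast
qed

theorem corollary2:
  fixes mul :: "'g::t2_space \<Rightarrow> 'g \<Rightarrow> 'g" and e :: 'g and ginv :: "'g \<Rightarrow> 'g"
    and act :: "'g \<Rightarrow> 'x::{uniform_space, t2_space} \<Rightarrow> 'x"
  assumes "topological_group mul e ginv"
    and "compact (UNIV :: 'x set)"
    and "is_flow mul e act"
    and "unif_left_synd_stable mul act"
  shows "ap_flow mul act"
proof (rule uniformly_equicontinuous_flow_imp_ap_flow)
  show "group mul e ginv"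
    using assms(1) unfolding topological_group_def by blast
  show "uniformly_equicontinuous_on UNIV act"
    using assms by (rule left_syndetically_stable_imp_uniformly_equicontinuous)
qed (use assms in blast)+

end
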